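(* Let $d\ge 1$, $T\ge 1$, let $\mathcal{X}\subseteq\mathbb{R}^d$ be a non-empty closed convex set containing $\mathbf{0}$, and let $0<\mu\le L$. Let $f_1,\dots,f_T:\mathcal{X}\to[0,\infty)$ be differentiable with $\frac{\mu}{2}\|y-x\|^2\le f_t(y)-f_t(x)-\langle\nabla f_t(x),y-x\rangle\le\frac{L}{2}\|y-x\|^2$ for all $t$ and $x,y\in\mathcal{X}$. With starting point $x_0=\mathbf{0}$, let $$C_{\mathsf{OPT}}=\min_{(x_1,\dots,x_T)\in\mathcal{X}^T}\sum_{t=1}^T\Big(f_t(x_t)+\frac12\|x_t-x_{t-1}\|^2\Big).$$ Then $$C_{\mathsf{OPT}}\ge\sum_{t=1}^T f_t(x_t^\star)+\frac{\mu}{2(\mu+4)}\big(\mathcal{P}_{2,T}^\star+\|x_1^\star\|^2\big).$$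
   Context: $x_t^\star=\arg\min_{x\in\mathcal{X}}f_t(x)$ and $\mathcal{P}_{2,T}^\star=\sum_{t=2}^T\|x_t^\star-x_{t-1}^\star\|^2$. *)

theory Defs
  imports "HOL-Analysis.Analysis"
begin

end

theory Submission
  imports Defs
begin

text \<open>Each \<open>f\<^sub>t\<close> grows quadratically away from its minimiser, so a feasible sequence \<open>x\<close>
  pays an excess cost of at least \<open>\<mu>/2 \<parallel>x\<^sub>t - x\<^sub>t\<^sup>\<star>\<parallel>\<^sup>2\<close> at time \<open>t\<close>. The increments of the
  minimiser path are controlled by the triangle inequality
  \<open>\<parallel>x\<^sub>t\<^sup>\<star> - x\<^sub>t\<^sub>-\<^sub>1\<^sup>\<star>\<parallel> \<le> \<parallel>x\<^sub>t\<^sup>\<star> - x\<^sub>t\<parallel> + \<parallel>x\<^sub>t - x\<^sub>t\<^sub>-\<^sub>1\<parallel> + \<parallel>x\<^sub>t\<^sub>-\<^sub>1 - x\<^sub>t\<^sub>-\<^sub>1\<^sup>\<star>\<parallel>\<close>; squaring with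
  a weighted Cauchy-Schwarz inequality (weight \<open>\<mu>/2\<close> on the middle term) bounds the squared
  path length of the minimisers by the excess costs plus the switching costs of \<open>x\<close>, with
  exactly the constant \<open>\<mu>/(2(\<mu>+4))\<close>.\<close>

lemma power2_sum3_le_weighted:
  fixes a b c k :: real
  assumes "k > 0"
  shows "(a + b + c)\<^sup>2 \<le> (2 + k) * (a\<^sup>2 + b\<^sup>2 / k + c\<^sup>2)"
proof -
  have "(2 + k) * (a\<^sup>2 + b\<^sup>2 / k + c\<^sup>2) - (a + b + c)\<^sup>2
      = (a - c)\<^sup>2 + (k * a - b)\<^sup>2 / k + (b - k * c)\<^sup>2 / k"
    using assms by (simp add: field_simps power2_eq_square)
  moreover have "(a - c)\<^sup>2 + (k * a - b)\<^sup>2 / k + (b - k * c)\<^sup>2 / k \<ge> 0"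
    using assms by simp
  ultimately show ?thesis by linarith
qed

lemma sum_shift_down:
  fixes g :: "nat \<Rightarrow> 'a::ab_group_add"
  assumes "g 0 = 0"
  shows "(\<Sum>t=1..T. g (t - 1)) = (\<Sum>t=1..T. g t) - g T"
  using assms by (induction T) simp_all

lemma strongly_convex_interpolation:
  fixes f :: "'a::real_inner \<Rightarrow> real" and g :: "'a \<Rightarrow> 'a"
  assumes sc: "\<And>x y. x \<in> X \<Longrightarrow> y \<in> X \<Longrightarrow> \<mu> / 2 * (norm (y - x))\<^sup>2 \<le> f y - f x - g x \<bullet> (y - x)"
    and "convex X" "x \<in> X" "y \<in> X" "0 \<le> s" "s \<le> 1"
  shows "f ((1 - s) *\<^sub>R x + s *\<^sub>R y)
           \<le> (1 - s) * f x + s * f y - \<mu> / 2 * s * (1 - s) * (norm (y - x))\<^sup>2"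
proof -
  define z where "z = (1 - s) *\<^sub>R x + s *\<^sub>R y"
  have "z \<in> X" using assms(2-) unfolding z_def by (simp add: convex_def)
  have x_z: "x - z = (- s) *\<^sub>R (y - x)" and y_z: "y - z = (1 - s) *\<^sub>R (y - x)"
    unfolding z_def by (simp_all add: algebra_simps)
  have "\<mu> / 2 * (s\<^sup>2 * (norm (y - x))\<^sup>2) \<le> f x - f z + s * (g z \<bullet> (y - x))"
    using sc[OF \<open>z \<in> X\<close> \<open>x \<in> X\<close>] by (simp add: x_z power_mult_distrib)
  from mult_left_mono[OF this, of "1 - s"] \<open>s \<le> 1\<close>
  have at_x: "(1 - s) * (\<mu> / 2 * (s\<^sup>2 * (norm (y - x))\<^sup>2))
      \<le> (1 - s) * (f x - f z + s * (g z \<bullet> (y - x)))" by simp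
  have "\<mu> / 2 * ((1 - s)\<^sup>2 * (norm (y - x))\<^sup>2) \<le> f y - f z - (1 - s) * (g z \<bullet> (y - x))"
    using sc[OF \<open>z \<in> X\<close> \<open>y \<in> X\<close>] \<open>s \<le> 1\<close> by (simp add: y_z power_mult_distrib)
  from mult_left_mono[OF this, of s] \<open>0 \<le> s\<close>
  have at_y: "s * (\<mu> / 2 * ((1 - s)\<^sup>2 * (norm (y - x))\<^sup>2))
      \<le> s * (f y - f z - (1 - s) * (g z \<bullet> (y - x)))" by simp
  have "(1 - s) * (\<mu> / 2 * (s\<^sup>2 * (norm (y - x))\<^sup>2)) + s * (\<mu> / 2 * ((1 - s)\<^sup>2 * (norm (y - x))\<^sup>2))
      = \<mu> / 2 * s * (1 - s) * (norm (y - x))\<^sup>2"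
    by (simp add: field_simps power2_eq_square)
  moreover have "(1 - s) * (f x - f z + s * (g z \<bullet> (y - x))) + s * (f y - f z - (1 - s) * (g z \<bullet> (y - x)))
      = (1 - s) * f x + s * f y - f z"
    by (simp add: algebra_simps)
  ultimately show ?thesis
    using at_x at_y unfolding z_def[symmetric] by linarith
qed

lemma strongly_convex_quadratic_growth:
  fixes f :: "'a::real_inner \<Rightarrow> real" and g :: "'a \<Rightarrow> 'a"
  assumes sc: "\<And>x y. x \<in> X \<Longrightarrow> y \<in> X \<Longrightarrow> \<mu> / 2 * (norm (y - x))\<^sup>2 \<le> f y - f x - g x \<bullet> (y - x)"
    and "convex X" "x\<^sub>m \<in> X" "y \<in> X"
    and min: "\<And>z. z \<in> X \<Longrightarrow> f x\<^sub>m \<le> f z"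
  shows "\<mu> / 2 * (norm (y - x\<^sub>m))\<^sup>2 \<le> f y - f x\<^sub>m"
proof -
  define D where "D = \<mu> / 2 * (norm (y - x\<^sub>m))\<^sup>2"
  have interior: "(1 - s) * D \<le> f y - f x\<^sub>m" if "s \<in> {0<..<1}" for s
  proof -
    have "f x\<^sub>m \<le> f ((1 - s) *\<^sub>R x\<^sub>m + s *\<^sub>R y)"
      using min \<open>convex X\<close> \<open>x\<^sub>m \<in> X\<close> \<open>y \<in> X\<close> that by (simp add: convex_def)
    also have "\<dots> \<le> (1 - s) * f x\<^sub>m + s * f y - s * ((1 - s) * D)"
      using strongly_convex_interpolation[OF sc assms(2-4), of s] that
      by (simp add: D_def algebra_simps)
    finally have "s * ((1 - s) * D) \<le> s * (f y - f x\<^sub>m)" by (simp add: algebra_simps)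
    then show ?thesis using that by simp
  qed
  have "\<forall>\<^sub>F s in at_right 0. (1 - s) * D \<le> f y - f x\<^sub>m"
    using eventually_at_right_real[OF zero_less_one] by (rule eventually_mono) (rule interior)
  moreover have "((\<lambda>s. (1 - s) * D) \<longlongrightarrow> D) (at_right 0)"
    by (auto intro!: tendsto_eq_intros)
  ultimately show ?thesis
    unfolding D_def[symmetric] by (intro tendsto_le[OF trivial_limit_at_right_real tendsto_const])
qed

lemma sum_power2_increments_le:
  fixes x y :: "nat \<Rightarrow> 'a::real_normed_vector" and k :: real
  assumes "k > 0" and "x 0 = y 0"
  shows "(\<Sum>t=1..T. (norm (y t - y (t - 1)))\<^sup>2)
           \<le> (2 + k) * (2 * (\<Sum>t=1..T. (norm (x t - y t))\<^sup>2) + (\<Sum>t=1..T. (norm (x t - x (t - 1)))\<^sup>2) / k)"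
proof -
  define e where "e t = norm (x t - y t)" for t
  define m where "m t = norm (x t - x (t - 1))" for t
  have increment: "(norm (y t - y (t - 1)))\<^sup>2 \<le> (2 + k) * ((e t)\<^sup>2 + (m t)\<^sup>2 / k + (e (t - 1))\<^sup>2)" for t
  proof -
    have "y t - y (t - 1) = (y t - x t) + (x t - x (t - 1)) + (x (t - 1) - y (t - 1))"
      by simp
    then have "norm (y t - y (t - 1)) \<le> e t + m t + e (t - 1)"
      unfolding e_def m_def
      by (metis norm_minus_commute norm_triangle_ineq add_right_mono order_trans)
    then have "(norm (y t - y (t - 1)))\<^sup>2 \<le> (e t + m t + e (t - 1))\<^sup>2"
      by (intro power_mono) auto
    also have "\<dots> \<le> (2 + k) * ((e t)\<^sup>2 + (m t)\<^sup>2 / k + (e (t - 1))\<^sup>2)"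
      by (rule power2_sum3_le_weighted[OF \<open>k > 0\<close>])
    finally show ?thesis .
  qed
  have "(\<Sum>t=1..T. (e (t - 1))\<^sup>2) \<le> (\<Sum>t=1..T. (e t)\<^sup>2)"
    using sum_shift_down[of "\<lambda>t. (e t)\<^sup>2"] \<open>x 0 = y 0\<close> by (simp add: e_def)
  moreover have "(\<Sum>t=1..T. (norm (y t - y (t - 1)))\<^sup>2)
      \<le> (2 + k) * ((\<Sum>t=1..T. (e t)\<^sup>2) + (\<Sum>t=1..T. (m t)\<^sup>2) / k + (\<Sum>t=1..T. (e (t - 1))\<^sup>2))"
    using sum_mono[of "{1..T}", OF increment]
    by (simp add: sum_distrib_left sum.distrib sum_divide_distrib distrib_left)
  ultimately show ?thesis
    using \<open>k > 0\<close> unfolding e_def m_def by (smt (verit) mult_left_mono)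
qed

theorem lemma5:
  fixes X :: "(real ^ 'd) set"
    and f :: "nat \<Rightarrow> real ^ 'd \<Rightarrow> real"
    and grad :: "nat \<Rightarrow> real ^ 'd \<Rightarrow> real ^ 'd"
    and xs :: "nat \<Rightarrow> real ^ 'd"
    and T :: nat and \<mu> L :: real
  assumes T: "T \<ge> 1"
    and X: "X \<noteq> {}" "closed X" "convex X" "0 \<in> X"
    and mu: "0 < \<mu>" "\<mu> \<le> L"
    and nonneg: "\<And>t x. t \<in> {1..T} \<Longrightarrow> x \<in> X \<Longrightarrow> f t x \<ge> 0"
    and deriv: "\<And>t x. t \<in> {1..T} \<Longrightarrow> x \<in> X \<Longrightarrow>
                  (f t has_derivative (\<lambda>h. grad t x \<bullet> h)) (at x within X)"
    and sc: "\<And>t x y. t \<in> {1..T} \<Longrightarrow> x \<in> X \<Longrightarrow> y \<in> X \<Longrightarrow>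
               \<mu> / 2 * (norm (y - x))\<^sup>2 \<le> f t y - f t x - grad t x \<bullet> (y - x)"
    and smooth: "\<And>t x y. t \<in> {1..T} \<Longrightarrow> x \<in> X \<Longrightarrow> y \<in> X \<Longrightarrow>
               f t y - f t x - grad t x \<bullet> (y - x) \<le> L / 2 * (norm (y - x))\<^sup>2"
    and xs_min: "\<And>t. t \<in> {1..T} \<Longrightarrow> xs t \<in> X \<and> (\<forall>y\<in>X. f t (xs t) \<le> f t y)"
  shows "(INF x \<in> {x :: nat \<Rightarrow> real ^ 'd. x 0 = 0 \<and> (\<forall>t\<in>{1..T}. x t \<in> X)}.
            (\<Sum>t=1..T. f t (x t) + 1/2 * (norm (x t - x (t - 1)))\<^sup>2))
         \<ge> (\<Sum>t=1..T. f t (xs t))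
           + \<mu> / (2 * (\<mu> + 4)) * ((\<Sum>t=2..T. (norm (xs t - xs (t - 1)))\<^sup>2) + (norm (xs 1))\<^sup>2)"
proof (rule cINF_greatest)
  show "{x :: nat \<Rightarrow> real ^ 'd. x 0 = 0 \<and> (\<forall>t\<in>{1..T}. x t \<in> X)} \<noteq> {}"
    using X(4) by (auto intro!: exI[of _ "\<lambda>_. 0"])
next
  fix x :: "nat \<Rightarrow> real ^ 'd"
  assume "x \<in> {x. x 0 = 0 \<and> (\<forall>t\<in>{1..T}. x t \<in> X)}"
  then have x0: "x 0 = 0" and xX: "\<And>t. t \<in> {1..T} \<Longrightarrow> x t \<in> X" by auto
  define y where "y = xs(0 := 0)"
  define E where "E = (\<Sum>t=1..T. (norm (x t - y t))\<^sup>2)"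
  define M where "M = (\<Sum>t=1..T. (norm (x t - x (t - 1)))\<^sup>2)"
  have "\<mu> / 2 * (norm (x t - y t))\<^sup>2 \<le> f t (x t) - f t (xs t)" if "t \<in> {1..T}" for t
    using strongly_convex_quadratic_growth[OF sc X(3)] xs_min xX that by (auto simp: y_def)
  then have "(\<Sum>t=1..T. \<mu> / 2 * (norm (x t - y t))\<^sup>2) \<le> (\<Sum>t=1..T. f t (x t) - f t (xs t))"
    by (rule sum_mono)
  then have excess: "(\<Sum>t=1..T. f t (xs t)) + \<mu> / 2 * E \<le> (\<Sum>t=1..T. f t (x t))"
    by (simp add: E_def sum_distrib_left sum_subtractf)
  have path: "(\<Sum>t=2..T. (norm (xs t - xs (t - 1)))\<^sup>2) + (norm (xs 1))\<^sup>2
      = (\<Sum>t=1..T. (norm (y t - y (t - 1)))\<^sup>2)"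
    using T by (simp add: y_def sum.atLeast_Suc_atMost numeral_2_eq_2)
  have "(\<Sum>t=1..T. (norm (y t - y (t - 1)))\<^sup>2) \<le> (2 + \<mu> / 2) * (2 * E + M / (\<mu> / 2))"
    unfolding E_def M_def using mu x0 by (intro sum_power2_increments_le) (auto simp: y_def)
  then have "\<mu> / (2 * (\<mu> + 4)) * (\<Sum>t=1..T. (norm (y t - y (t - 1)))\<^sup>2)
      \<le> \<mu> / (2 * (\<mu> + 4)) * ((2 + \<mu> / 2) * (2 * E + M / (\<mu> / 2)))"
    using mu by (intro mult_left_mono) auto
  also have "\<dots> = \<mu> / 2 * E + 1/2 * M"
    using mu by (simp add: divide_simps) (simp add: algebra_simps)
  finally show "(\<Sum>t=1..T. f t (xs t))
      + \<mu> / (2 * (\<mu> + 4)) * ((\<Sum>t=2..T. (norm (xs t - xs (t - 1)))\<^sup>2) + (norm (xs 1))\<^sup>2)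
      \<le> (\<Sum>t=1..T. f t (x t) + 1/2 * (norm (x t - x (t - 1)))\<^sup>2)"
    unfolding path using excess by (simp add: M_def sum.distrib sum_distrib_left)
qed

end
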